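(* Let $k_1,k_2,k_3$ be positive integers and let $D$ be a Hamiltonian digraph containing no subdivision of $B(k_1,k_2;k_3)$ as a subdigraph. Then $\chi(D)\le 4k$, where $k=\max\{k_1,k_2,k_3\}$.
   Context: Digraphs are orientations of finite simple graphs (no loops, no multiple arcs, no pair of opposite arcs). $\chi(D)$ is the chromatic number of the underlying undirected graph. A digraph is Hamiltonian if it contains a directed cycle through all its vertices. The $(2+1)$-bispindle $B(k_1,k_2;k_3)$ is the union of two directed $xy$-paths of lengths $k_1$ and $k_2$ and one directed $yx$-path of length $k_3$, these three paths being pairwise internally disjoint. A subdivision of a digraph $H$ is obtained by replacing each arc $(u,v)$ by a directed $uv$-path of length at least $1$, these paths being internally disjoint. *)

theory Defs
  imports Main
begin

definition digraph :: "'a set \<Rightarrow> ('a \<times> 'a) set \<Rightarrow> bool" where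
  "digraph V A \<longleftrightarrow> finite V \<and> A \<subseteq> V \<times> V \<and>
     (\<forall>v. (v, v) \<notin> A) \<and> (\<forall>u v. (u, v) \<in> A \<longrightarrow> (v, u) \<notin> A)"

definition proper_colouring :: "'a set \<Rightarrow> ('a \<times> 'a) set \<Rightarrow> ('a \<Rightarrow> nat) \<Rightarrow> nat \<Rightarrow> bool" where
  "proper_colouring V A c k \<longleftrightarrow> (\<forall>v\<in>V. c v < k) \<and> (\<forall>(u, v)\<in>A. c u \<noteq> c v)"

definition chromatic_number :: "'a set \<Rightarrow> ('a \<times> 'a) set \<Rightarrow> nat" where
  "chromatic_number V A = (LEAST k. \<exists>c. proper_colouring V A c k)"

definition hamiltonian :: "'a set \<Rightarrow> ('a \<times> 'a) set \<Rightarrow> bool" where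
  "hamiltonian V A \<longleftrightarrow> (\<exists>vs. vs \<noteq> [] \<and> distinct vs \<and> set vs = V \<and>
     (\<forall>i < length vs. (vs ! i, vs ! ((i + 1) mod length vs)) \<in> A))"

definition dpath :: "('a \<times> 'a) set \<Rightarrow> 'a list \<Rightarrow> 'a \<Rightarrow> 'a \<Rightarrow> bool" where
  "dpath A p x y \<longleftrightarrow> p \<noteq> [] \<and> distinct p \<and> hd p = x \<and> last p = y \<and>
     (\<forall>i. Suc i < length p \<longrightarrow> (p ! i, p ! Suc i) \<in> A)"

definition plen :: "'a list \<Rightarrow> nat" where
  "plen p = length p - 1"

definition inner :: "'a list \<Rightarrow> 'a set" where
  "inner p = set (butlast (tl p))"

text \<open>D contains a subdivision of the (2+1)-bispindle B(k1,k2;k3) as a subdigraph: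
  a subdivision of B(k1,k2;k3) replaces each of its arcs by a path of length at least 1,
  so it consists of two distinct directed xy-paths of lengths at least k1, k2 and one directed
  yx-path of length at least k3, pairwise internally disjoint. (The two xy-paths must be
  distinct subgraphs, which matters only when both are single arcs.)\<close>
definition contains_bispindle_subdivision ::
  "'a set \<Rightarrow> ('a \<times> 'a) set \<Rightarrow> nat \<Rightarrow> nat \<Rightarrow> nat \<Rightarrow> bool" where
  "contains_bispindle_subdivision V A k1 k2 k3 \<longleftrightarrow>
     (\<exists>x y P1 P2 P3. x \<in> V \<and> y \<in> V \<and> x \<noteq> y \<and>
        dpath A P1 x y \<and> dpath A P2 x y \<and> dpath A P3 y x \<and> P1 \<noteq> P2 \<and>
        plen P1 \<ge> k1 \<and> plen P2 \<ge> k2 \<and> plen P3 \<ge> k3 \<and>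
        inner P1 \<inter> inner P2 = {} \<and> inner P1 \<inter> inner P3 = {} \<and>
        inner P2 \<inter> inner P3 = {})"

end

(* Let v 0, ..., v (n - 1) be the Hamiltonian cycle and K = max k1 k2 k3.
   Two crossing chords v 0 v L and v K v m that cut the cycle into four segments of
   length at least K close, in each of their four orientations, a subdivision of
   B(k1,k2;k3) with the cycle.  So if v i v (i + L)
   is a chord of least span L in [2K, n - 2K], the vertex v (i + K) has every neighbour
   within cycle distance 2K, and hence degree at most 4K - 2.  Deleting it and replacing
   the cycle arcs p y s by the shortcut p s keeps the digraph Hamiltonian and free of
   bispindle subdivisions (a subdivision using p s lifts to one using p y s), so induction
   colours the rest with 4K colours and leaves a colour free for the deleted vertex. *)

theory Submission
  imports Defs
begin

lemma mod_eq_close_imp_eq: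
  fixes i j :: nat
  assumes "i mod n = j mod n" "i < j + n" "j < i + n"
  shows "i = j"
proof (cases "i \<le> j")
  case True
  with assms(1) obtain s where "j = i + n * s" by (rule mod_eq_nat2E)
  then show ?thesis using assms(3) by (cases s) auto
next
  case False
  with assms(1) obtain s where "i = j + n * s" by (elim mod_eq_nat1E) auto
  then show ?thesis using assms(2) by (cases s) auto
qed

lemma mod_add_left_cancel_nat: "((b::nat) + i) mod n = (b + j) mod n \<longleftrightarrow> i mod n = j mod n"
  by (simp add: nat_mod_eq_iff)

definition adj :: "('a \<times> 'a) set \<Rightarrow> 'a \<Rightarrow> 'a \<Rightarrow> bool" where
  "adj A u w \<longleftrightarrow> (u, w) \<in> A \<or> (w, u) \<in> A"

definition neighbours :: "('a \<times> 'a) set \<Rightarrow> 'a \<Rightarrow> 'a set" where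
  "neighbours A u = {w. adj A u w}"

lemma adj_sym: "adj A u w \<longleftrightarrow> adj A w u"
  unfolding adj_def by blast

lemma dpath_iff_successively:
  "dpath A P x y \<longleftrightarrow>
     P \<noteq> [] \<and> distinct P \<and> hd P = x \<and> last P = y \<and> successively (\<lambda>u w. (u, w) \<in> A) P"
  unfolding dpath_def successively_conv_nth by blast

lemma dpath_snoc:
  assumes "dpath A P x y" "(y, z) \<in> A" "z \<notin> set P"
  shows "dpath A (P @ [z]) x z"
  using assms unfolding dpath_iff_successively by (auto simp: successively_append_iff)

lemma dpath_Cons:
  assumes "(x, y) \<in> A" "x \<notin> set P" "dpath A P y z"
  shows "dpath A (x # P) x z"
  using assms unfolding dpath_iff_successively by (auto simp: successively_Cons)

lemma inner_snoc: "P \<noteq> [] \<Longrightarrow> inner (P @ [z]) = set (tl P)"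
  unfolding inner_def by (cases P) auto

lemma inner_Cons: "P \<noteq> [] \<Longrightarrow> inner (x # P) = set (butlast P)"
  unfolding inner_def by simp

lemma contains_bispindle_subdivisionI:
  assumes "x \<in> V" "y \<in> V" "x \<noteq> y"
    and "dpath A P1 x y" "dpath A P2 x y" "dpath A P3 y x" "P1 \<noteq> P2"
    and "k1 \<le> plen P1" "k2 \<le> plen P2" "k3 \<le> plen P3"
    and "inner P1 \<inter> inner P2 = {}" "inner P1 \<inter> inner P3 = {}" "inner P2 \<inter> inner P3 = {}"
  shows "contains_bispindle_subdivision V A k1 k2 k3"
  using assms unfolding contains_bispindle_subdivision_def by blast

lemma inner_subset_set: "inner P \<subseteq> set P"
  unfolding inner_def by (cases P) (auto dest: in_set_butlastD)

lemma inner_eq_set_minus_ends: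
  assumes "P \<noteq> []" "distinct P" "hd P \<noteq> last P"
  shows "inner P = set P - {hd P, last P}"
proof -
  obtain a Q where P: "P = a # Q" using assms(1) by (cases P) auto
  then have "Q \<noteq> []" using assms(3) by auto
  then obtain R b where "Q = R @ [b]" by (cases Q rule: rev_cases) auto
  then show ?thesis using assms(2) unfolding inner_def P by auto
qed

lemma dpath_inner:
  assumes "dpath A P x z" "x \<noteq> z"
  shows "inner P = set P - {x, z}"
  using assms inner_eq_set_minus_ends[of P] unfolding dpath_def by blast

lemma dpath_vertex_on_arc:
  assumes "dpath A P x z" "x \<noteq> z" "u \<in> set P"
  shows "\<exists>w. adj A u w"
proof -
  obtain i where i: "i < length P" "P ! i = u" using assms(3) by (auto simp: in_set_conv_nth)
  have arcs: "\<And>j. Suc j < length P \<Longrightarrow> (P ! j, P ! Suc j) \<in> A"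
    using assms(1) unfolding dpath_def by blast
  have "length P \<noteq> 1" using assms(1,2) unfolding dpath_def by (auto simp: length_Suc_conv)
  then consider "Suc i < length P" | "Suc (i - 1) = i" "i < length P" using i by linarith
  then show ?thesis
    by cases (use arcs i in \<open>(metis adj_def)+\<close>)
qed

lemma dpath_arc_ends:
  assumes "dpath A P x z" "P = l @ p # s # r"
  shows "p \<noteq> z" "s \<noteq> x" "p = x \<Longrightarrow> s = z \<Longrightarrow> P = [x, z]"
proof -
  have d: "distinct P" and x: "hd P = x" and z: "last P = z"
    using assms(1) unfolding dpath_def by auto
  show "p \<noteq> z" using d z unfolding assms(2) by (cases r rule: rev_cases) auto
  show "s \<noteq> x" using d x unfolding assms(2) by (cases l) auto
  assume "p = x" "s = z"
  then have "l = []" "r = []"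
    using d x z unfolding assms(2) by (cases l; auto; cases r rule: rev_cases; auto)+
  then show "P = [x, z]" using assms(2) \<open>p = x\<close> \<open>s = z\<close> by simp
qed

fun subdivide :: "'a \<Rightarrow> 'a \<Rightarrow> 'a \<Rightarrow> 'a list \<Rightarrow> 'a list" where
  "subdivide p s y (u # w # r) =
     (if u = p \<and> w = s then u # y # subdivide p s y (w # r) else u # subdivide p s y (w # r))"
| "subdivide p s y r = r"

lemma subdivide_eq_Nil_iff [simp]: "subdivide p s y P = [] \<longleftrightarrow> P = []"
  by (induction p s y P rule: subdivide.induct) auto

lemma hd_subdivide [simp]: "hd (subdivide p s y P) = hd P"
  by (induction p s y P rule: subdivide.induct) auto

lemma last_subdivide [simp]: "last (subdivide p s y P) = last P"
  by (induction p s y P rule: subdivide.induct) auto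

lemma length_subdivide: "length P \<le> length (subdivide p s y P)"
  by (induction p s y P rule: subdivide.induct) auto

lemma plen_subdivide: "plen P \<le> plen (subdivide p s y P)"
  unfolding plen_def using length_subdivide by (rule diff_le_mono)

lemma set_subdivide: "set (subdivide p s y P) \<subseteq> insert y (set P)"
  by (induction p s y P rule: subdivide.induct) auto

lemma removeAll_subdivide: "y \<notin> set P \<Longrightarrow> removeAll y (subdivide p s y P) = P"
  by (induction p s y P rule: subdivide.induct) auto

lemma mem_subdivide:
  "y \<in> set (subdivide p s y P) \<Longrightarrow> y \<notin> set P \<Longrightarrow> \<exists>l r. P = l @ p # s # r"
proof (induction p s y P rule: subdivide.induct)
  case (1 p s y u w r)
  show ?case
  proof (cases "u = p \<and> w = s")
    case True
    then show ?thesis by blast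
  next
    case False
    then obtain l r' where "w # r = l @ p # s # r'" using 1 by auto
    then show ?thesis by (metis append_Cons)
  qed
qed auto

lemma distinct_subdivide: "distinct P \<Longrightarrow> y \<notin> set P \<Longrightarrow> distinct (subdivide p s y P)"
proof (induction p s y P rule: subdivide.induct)
  case (1 p s y u w r)
  have "distinct (subdivide p s y (w # r))" using 1 by (cases "u = p \<and> w = s") auto
  moreover have "u \<notin> set (subdivide p s y (w # r))" using 1 set_subdivide by fastforce
  moreover have "y \<notin> set (subdivide p s y (w # r))" if "u = p"
  proof
    assume "y \<in> set (subdivide p s y (w # r))"
    moreover have "y \<notin> set (w # r)" using "1.prems"(2) by simp
    ultimately obtain l r' where "w # r = l @ p # s # r'" by (blast dest: mem_subdivide)
    then have "p \<in> set (w # r)" by simp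
    then show False using 1 that by auto
  qed
  ultimately show ?case using 1 by auto
qed auto

lemma successively_subdivide:
  assumes "successively R' P" "\<And>u w. R' u w \<Longrightarrow> R u w \<or> (u = p \<and> w = s)" "R p y" "R y s"
  shows "successively R (subdivide p s y P)"
  using assms by (induction p s y P rule: subdivide.induct) (auto simp: successively_Cons)

lemma dpath_subdivide:
  assumes "dpath A' P x z" "y \<notin> set P"
    and "\<And>u w. (u, w) \<in> A' \<Longrightarrow> (u, w) \<in> A \<or> (u = p \<and> w = s)" "(p, y) \<in> A" "(y, s) \<in> A"
  shows "dpath A (subdivide p s y P) x z"
  using assms unfolding dpath_iff_successively
  by (auto intro: distinct_subdivide successively_subdivide)

lemma inner_subdivide:
  assumes "dpath A P x z" "x \<noteq> z" "y \<notin> set P"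
  shows "inner (subdivide p s y P) \<subseteq> insert y (inner P)"
proof -
  have P: "P \<noteq> []" "distinct P" "hd P = x" "last P = z" using assms(1) unfolding dpath_def by auto
  then have "inner (subdivide p s y P) = set (subdivide p s y P) - {x, z}"
    using inner_eq_set_minus_ends[of "subdivide p s y P"] distinct_subdivide[OF P(2) assms(3)] assms(2)
    by simp
  then show ?thesis using set_subdivide[of p s y P] dpath_inner[OF assms(1,2)] by blast
qed

lemma inner_subdivide_disjoint:
  assumes P: "dpath A P x z" and Q: "dpath A Q x' z'" and "x \<noteq> z" and ends: "{x', z'} = {x, z}"
    and disjoint: "inner P \<inter> inner Q = {}" and "P \<noteq> Q" and "y \<notin> set P" "y \<notin> set Q"
  shows "inner (subdivide p s y P) \<inter> inner (subdivide p s y Q) = {}"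
proof -
  have "x' \<noteq> z'" using ends \<open>x \<noteq> z\<close> by auto
  (* y lies in both interiors only if both paths use the arc p s, which then joins their
     common ends, forcing P = [x, z] = Q. *)
  have "y \<notin> inner (subdivide p s y P) \<inter> inner (subdivide p s y Q)"
  proof
    assume "y \<in> inner (subdivide p s y P) \<inter> inner (subdivide p s y Q)"
    then obtain l r l' r' where lP: "P = l @ p # s # r" and lQ: "Q = l' @ p # s # r'"
      using inner_subset_set mem_subdivide \<open>y \<notin> set P\<close> \<open>y \<notin> set Q\<close> by (metis IntE subsetD)
    note eP = dpath_arc_ends[OF P lP] and eQ = dpath_arc_ends[OF Q lQ]
    have "p \<in> set P" "s \<in> set P" "p \<in> set Q" "s \<in> set Q" using lP lQ by auto
    then have "p = x \<and> s = z \<and> x' = x \<and> z' = z"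
      using eP eQ disjoint ends dpath_inner[OF P \<open>x \<noteq> z\<close>] dpath_inner[OF Q \<open>x' \<noteq> z'\<close>]
      by (auto simp: doubleton_eq_iff)
    then show False using eP(3) eQ(3) \<open>P \<noteq> Q\<close> by simp
  qed
  then show ?thesis
    using inner_subdivide[OF P \<open>x \<noteq> z\<close>] inner_subdivide[OF Q \<open>x' \<noteq> z'\<close>] assms(6-8) disjoint
    by blast
qed

lemma contains_bispindle_subdivision_subdivide_arc:
  assumes B: "contains_bispindle_subdivision V' A' k1 k2 k3" and "V' \<subseteq> V"
    and "(p, y) \<in> A" "(y, s) \<in> A"
    and A': "\<And>u w. (u, w) \<in> A' \<Longrightarrow> u \<noteq> y \<and> w \<noteq> y \<and> ((u, w) \<in> A \<or> (u = p \<and> w = s))"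
  shows "contains_bispindle_subdivision V A k1 k2 k3"
proof -
  obtain x z P1 P2 P3 where xz: "x \<in> V'" "z \<in> V'" "x \<noteq> z"
    and P: "dpath A' P1 x z" "dpath A' P2 x z" "dpath A' P3 z x" "P1 \<noteq> P2"
    and len: "k1 \<le> plen P1" "k2 \<le> plen P2" "k3 \<le> plen P3"
    and disjoint: "inner P1 \<inter> inner P2 = {}" "inner P1 \<inter> inner P3 = {}" "inner P2 \<inter> inner P3 = {}"
    using B unfolding contains_bispindle_subdivision_def by blast
  have avoid: "y \<notin> set P" if path: "dpath A' P a b" "a \<noteq> b" for P a b
  proof
    assume "y \<in> set P"
    then obtain w where "adj A' y w" using dpath_vertex_on_arc[OF path] by blast
    then show False using A' unfolding adj_def by blast
  qed
  have y: "y \<notin> set P1" "y \<notin> set P2" "y \<notin> set P3"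
    using avoid P(1-3) xz(3) by auto
  have arcs: "(u, w) \<in> A \<or> (u = p \<and> w = s)" if "(u, w) \<in> A'" for u w
    using A'[OF that] by blast
  define Q1 Q2 Q3 where "Q1 = subdivide p s y P1" and "Q2 = subdivide p s y P2"
    and "Q3 = subdivide p s y P3"
  have "k1 \<le> plen Q1" "k2 \<le> plen Q2" "k3 \<le> plen Q3"
    using len plen_subdivide unfolding Q1_def Q2_def Q3_def by (meson le_trans)+
  moreover have "Q1 \<noteq> Q2"
    using removeAll_subdivide[OF y(1)] removeAll_subdivide[OF y(2)] P(4)
    unfolding Q1_def Q2_def by metis
  moreover have "dpath A Q1 x z" "dpath A Q2 x z" "dpath A Q3 z x"
    unfolding Q1_def Q2_def Q3_def using P y arcs assms(3,4) by (blast intro: dpath_subdivide)+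
  moreover have "P1 \<noteq> P3" "P2 \<noteq> P3" using P xz unfolding dpath_def by auto
  then have "inner Q1 \<inter> inner Q2 = {}" "inner Q1 \<inter> inner Q3 = {}" "inner Q2 \<inter> inner Q3 = {}"
    unfolding Q1_def Q2_def Q3_def
    using inner_subdivide_disjoint[OF P(1) P(2) xz(3) _ disjoint(1) P(4) y(1,2)]
      inner_subdivide_disjoint[OF P(1) P(3) xz(3) _ disjoint(2) _ y(1,3)]
      inner_subdivide_disjoint[OF P(2) P(3) xz(3) _ disjoint(3) _ y(2,3)]
    by (simp_all add: insert_commute)
  ultimately show ?thesis
    using xz \<open>V' \<subseteq> V\<close> by (intro contains_bispindle_subdivisionI[of x V z A Q1 Q2 Q3]) auto
qed

lemma proper_colouring_extend:
  assumes c: "proper_colouring (V - {y}) A' c k"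
    and A': "\<And>a b. (a, b) \<in> A \<Longrightarrow> a \<noteq> y \<Longrightarrow> b \<noteq> y \<Longrightarrow> (a, b) \<in> A'"
    and loopless: "\<forall>u. (u, u) \<notin> A"
    and N: "finite (neighbours A y)" "card (neighbours A y) < k"
  obtains col where "proper_colouring V A (c(y := col)) k"
proof -
  have "card (c ` neighbours A y) < card {..<k}"
    using card_image_le[OF N(1), of c] N(2) by simp
  then obtain col where col: "col < k" "col \<notin> c ` neighbours A y"
    by (metis card_mono finite_imageI N(1) lessThan_iff not_le subsetI)
  have "proper_colouring V A (c(y := col)) k"
    unfolding proper_colouring_def
  proof (intro conjI ballI)
    fix u assume "u \<in> V"
    then show "(c(y := col)) u < k" using c col(1) unfolding proper_colouring_def by auto
  next
    fix e assume e: "e \<in> A"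
    obtain a b where ab: "e = (a, b)" by (cases e)
    have "a \<noteq> b" using e ab loopless by auto
    moreover have "b \<in> neighbours A a" "a \<in> neighbours A b"
      using e ab unfolding neighbours_def adj_def by auto
    moreover have "c a \<noteq> c b" if "a \<noteq> y" "b \<noteq> y"
      using A'[OF e[unfolded ab] that] c unfolding proper_colouring_def by auto
    ultimately show "case e of (a, b) \<Rightarrow> (c(y := col)) a \<noteq> (c(y := col)) b"
      using ab col(2) by auto
  qed
  then show ?thesis by (rule that)
qed

(* v i is the i-th vertex of a directed cycle of length n, indices read modulo n;
   the cycle is Hamiltonian in the digraph with vertex set range v. *)
locale cycle_enum =
  fixes A :: "('a \<times> 'a) set" and n :: nat and v :: "nat \<Rightarrow> 'a"
  assumes pos: "0 < n"
    and eq_iff: "v i = v j \<longleftrightarrow> i mod n = j mod n"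
    and arc: "(v i, v (Suc i)) \<in> A"
begin

lemma eq_iff_less: "i < n \<Longrightarrow> j < n \<Longrightarrow> v i = v j \<longleftrightarrow> i = j"
  by (simp add: eq_iff)

lemma add_period: "v (n + i) = v i"
  by (simp add: eq_iff)

lemma period: "v n = v 0"
  by (simp add: eq_iff)

lemma shift: "cycle_enum A n (\<lambda>i. v (b + i))"
  by unfold_locales (simp_all add: pos eq_iff arc mod_add_left_cancel_nat)

lemma range_eq: "range v = v ` {..<n}"
proof -
  have "v i \<in> v ` {..<n}" for i
    by (rule image_eqI[of _ _ "i mod n"]) (simp_all add: eq_iff pos)
  then show ?thesis by blast
qed

lemma range_shift: "range (\<lambda>i. v (b + i)) = range v"
proof (intro subset_antisym subsetI)
  fix x assume "x \<in> range v"
  then obtain i where x: "x = v i" by blast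
  have "b \<le> n * b" using pos by simp
  then have "b + (n * b - b + i) = n * b + i" by linarith
  then have "x = v (b + (n * b - b + i))"
    unfolding x by (simp only:) (simp add: eq_iff)
  then show "x \<in> range (\<lambda>i. v (b + i))" by (rule range_eqI)
qed auto

lemma inj_on_window: "inj_on v {a..<a + n}"
  by (rule inj_onI) (auto simp: eq_iff intro: mod_eq_close_imp_eq)

lemma dpath_segment:
  assumes "a \<le> b" "b < a + n"
  shows "dpath A (map v [a..<Suc b]) (v a) (v b)"
  unfolding dpath_def
proof (intro conjI allI impI)
  have "inj_on v {a..<Suc b}"
    by (rule inj_on_subset[OF inj_on_window[of a]]) (use assms in auto)
  then show "distinct (map v [a..<Suc b])" by (simp add: distinct_map del: upt_Suc)
  fix i assume "Suc i < length (map v [a..<Suc b])"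
  then show "(map v [a..<Suc b] ! i, map v [a..<Suc b] ! Suc i) \<in> A"
    using arc[of "a + i"] by (simp del: upt_Suc)
qed (use assms in \<open>simp_all add: hd_map last_map del: upt_Suc\<close>)

lemma crossing_arcs_bispindle:
  assumes "0 < s" "s < p" "p < q" "q < n"
    and "(v 0, v p) \<in> A" "(v s, v q) \<in> A"
    and "k1 \<le> s + 1" "k2 \<le> q - p + 1" "k3 \<le> n - q"
  shows "contains_bispindle_subdivision (range v) A k1 k2 k3"
proof -
  define P1 where "P1 = map v [0..<Suc s] @ [v q]"
  define P2 where "P2 = v 0 # map v [p..<Suc q]"
  define P3 where "P3 = map v [q..<Suc n]"
  have inj: "inj_on v {0..<n}" using inj_on_window[of 0] by simp
  have mem_iff: "v i \<in> v ` I \<longleftrightarrow> i \<in> I" if "i < n" "I \<subseteq> {0..<n}" for i I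
    using inj that by (simp add: inj_on_image_mem_iff)
  have inner1: "inner P1 = v ` {Suc 0..<Suc s}"
    unfolding P1_def by (simp add: inner_snoc map_tl[symmetric] del: upt_Suc)
  have inner2: "inner P2 = v ` {p..<q}" unfolding P2_def using assms(3)
    by (simp add: inner_Cons map_butlast[symmetric] upt_Suc_append del: upt_Suc)
  have inner3: "inner P3 = v ` {Suc q..<n}" unfolding P3_def inner_def using assms(4)
    by (simp add: map_tl[symmetric] map_butlast[symmetric] upt_Suc_append del: upt_Suc)
  have disj: "v ` I \<inter> v ` J = {}" if "I \<subseteq> {0..<n}" "J \<subseteq> {0..<n}" "I \<inter> J = {}" for I J
    using inj that by (metis image_empty inj_on_image_Int)
  have i12: "inner P1 \<inter> inner P2 = {}" and i13: "inner P1 \<inter> inner P3 = {}"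
    and i23: "inner P2 \<inter> inner P3 = {}"
    unfolding inner1 inner2 inner3 using assms(1-4) by (intro disj; auto)+
  have d1: "dpath A P1 (v 0) (v q)"
    unfolding P1_def using assms(1-4,6)
    by (intro dpath_snoc[OF dpath_segment]) (simp_all add: mem_iff del: upt_Suc)
  have d2: "dpath A P2 (v 0) (v q)"
    unfolding P2_def using assms(1-5)
    by (intro dpath_Cons[OF _ _ dpath_segment]) (simp_all add: mem_iff del: upt_Suc)
  have d3: "dpath A P3 (v q) (v 0)"
    unfolding P3_def using dpath_segment[of q n] assms by (simp add: period)
  have "v s \<in> inner P1" unfolding inner1 using assms by auto
  then have "P1 \<noteq> P2" using i12 by auto
  moreover have "v 0 \<noteq> v q" using assms by (simp add: eq_iff)
  moreover have "plen P1 = s + 1" "plen P2 = q - p + 1" "plen P3 = n - q"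
    using assms(3,4) by (simp_all add: P1_def P2_def P3_def plen_def)
  ultimately show ?thesis
    using assms(7-9)
    by (intro contains_bispindle_subdivisionI[OF _ _ _ d1 d2 d3 _ _ _ _ i12 i13 i23]) auto
qed

lemma crossing_arcs_bispindle_at:
  assumes "0 < s" "s < p" "p < q" "q < n"
    and "(v b, v (b + p)) \<in> A" "(v (b + s), v (b + q)) \<in> A"
    and "k1 \<le> s + 1" "k2 \<le> q - p + 1" "k3 \<le> n - q"
  shows "contains_bispindle_subdivision (range v) A k1 k2 k3"
  using cycle_enum.crossing_arcs_bispindle[OF shift, of s p q] assms
  by (simp add: range_shift)

lemma crossing_chords_bispindle:
  assumes K: "1 \<le> K" "k1 \<le> K" "k2 \<le> K" "k3 \<le> K"
    and L: "2 * K \<le> L" "L \<le> n - 2 * K" and chord0: "adj A (v 0) (v L)"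
    and m: "L + K \<le> m" "m \<le> n - L + K" and chordK: "adj A (v K) (v m)"
  shows "contains_bispindle_subdivision (range v) A k1 k2 k3"
proof -
  have "m < n" using K L m by linarith
  consider "(v 0, v L) \<in> A" "(v K, v m) \<in> A" | "(v 0, v L) \<in> A" "(v m, v K) \<in> A"
    | "(v L, v 0) \<in> A" "(v K, v m) \<in> A" | "(v L, v 0) \<in> A" "(v m, v K) \<in> A"
    using chord0 chordK unfolding adj_def by blast
  then show ?thesis
  proof cases
    case 1
    then show ?thesis using K L m by (intro crossing_arcs_bispindle[of K L m]) auto
  next
    case 2
    have "m + (n - m) = n" "m + (n - m + K) = n + K" "m + (n - m + L) = n + L"
      using \<open>m < n\<close> by auto
    then show ?thesis using 2 K L m
      by (intro crossing_arcs_bispindle_at[of "n - m" "n - m + K" "n - m + L" m])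
        (auto simp: add_period period)
  next
    case 3
    have "K + (m - K) = m" "K + (L - K) = L" "K + (n - K) = n"
      using K L m by auto
    then show ?thesis using 3 K L m
      by (intro crossing_arcs_bispindle_at[of "L - K" "m - K" "n - K" K]) (auto simp: period)
  next
    case 4
    have "L + (n - L) = n" "L + (m - L) = m" "L + (n - L + K) = n + K"
      using K L m by auto
    then show ?thesis using 4 K L m
      by (intro crossing_arcs_bispindle_at[of "m - L" "n - L" "n - L + K" L])
        (auto simp: add_period period)
  qed
qed

(* A far neighbour v (i + K + d) of v (i + K) would span long chords of lengths d and n - d,
   both at least L, and so cross the chord at v i as in crossing_chords_bispindle. *)
lemma shortest_long_chord_no_far_neighbour:
  assumes K: "1 \<le> K" "k1 \<le> K" "k2 \<le> K" "k3 \<le> K"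
    and no_bispindle: "\<not> contains_bispindle_subdivision (range v) A k1 k2 k3"
    and L: "2 * K \<le> L" "L \<le> n - 2 * K" and chord: "adj A (v i) (v (i + L))"
    and shortest: "\<And>d j. 2 * K \<le> d \<Longrightarrow> d \<le> n - 2 * K \<Longrightarrow> adj A (v j) (v (j + d)) \<Longrightarrow> L \<le> d"
    and d: "2 * K \<le> d" "d \<le> n - 2 * K"
  shows "\<not> adj A (v (i + K)) (v (i + K + d))"
proof
  assume far: "adj A (v (i + K)) (v (i + K + d))"
  have "L \<le> d" by (rule shortest[OF d far])
  have "i + K + d + (n - d) = n + (i + K)" using d by linarith
  then have "v (i + K + d + (n - d)) = v (i + K)" by (simp only: add_period)
  then have "adj A (v (i + K + d)) (v (i + K + d + (n - d)))"
    using far by (simp add: adj_sym)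
  then have "L \<le> n - d" using d by (intro shortest[of "n - d" "i + K + d"]) auto
  interpret w: cycle_enum A n "\<lambda>j. v (i + j)" by (rule shift)
  have "contains_bispindle_subdivision (range (\<lambda>j. v (i + j))) A k1 k2 k3"
    using K L chord far \<open>L \<le> d\<close> \<open>L \<le> n - d\<close> d
    by (intro w.crossing_chords_bispindle[where L = L and m = "K + d"]) (auto simp: add.assoc)
  then show False using no_bispindle by (simp add: range_shift)
qed

lemma card_neighbours_le_if_no_far_neighbour:
  assumes arcs: "A \<subseteq> range v \<times> range v" and loopless: "\<forall>u. (u, u) \<notin> A"
    and no_far: "\<And>d. 2 * K \<le> d \<Longrightarrow> d \<le> n - 2 * K \<Longrightarrow> \<not> adj A (v 0) (v d)"
  shows "card (neighbours A (v 0)) \<le> 4 * K - 2"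
proof -
  have "neighbours A (v 0) \<subseteq> v ` ({0<..<2 * K} \<union> {n - 2 * K<..<n})"
  proof
    fix u assume "u \<in> neighbours A (v 0)"
    then have a: "adj A (v 0) u" by (simp add: neighbours_def)
    then obtain d where d: "d < n" "u = v d"
      using arcs range_eq unfolding adj_def by blast
    have "d \<noteq> 0" using a loopless d unfolding adj_def by (cases d) auto
    moreover have "\<not> (2 * K \<le> d \<and> d \<le> n - 2 * K)" using no_far a d by blast
    ultimately show "u \<in> v ` ({0<..<2 * K} \<union> {n - 2 * K<..<n})" using d by auto
  qed
  then have "card (neighbours A (v 0)) \<le> card ({0<..<2 * K} \<union> {n - 2 * K<..<n})"
    by (meson card_image_le card_mono finite_Un finite_greaterThanLessThan finite_imageI le_trans)
  also have "\<dots> \<le> card {0<..<2 * K} + card {n - 2 * K<..<n}" by (rule card_Un_le)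
  also have "\<dots> \<le> 4 * K - 2" by simp
  finally show ?thesis .
qed

lemma low_degree_vertex:
  assumes K: "1 \<le> K" "k1 \<le> K" "k2 \<le> K" "k3 \<le> K"
    and arcs: "A \<subseteq> range v \<times> range v" and loopless: "\<forall>u. (u, u) \<notin> A"
    and no_bispindle: "\<not> contains_bispindle_subdivision (range v) A k1 k2 k3"
  shows "\<exists>y \<in> range v. card (neighbours A y) \<le> 4 * K - 2"
proof -
  define long where "long d \<longleftrightarrow> 2 * K \<le> d \<and> d \<le> n - 2 * K \<and> (\<exists>j. adj A (v j) (v (j + d)))" for d
  obtain i where no_far: "\<And>d. 2 * K \<le> d \<Longrightarrow> d \<le> n - 2 * K \<Longrightarrow> \<not> adj A (v (i + K)) (v (i + K + d))"
  proof (cases "\<exists>d. long d")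
    case True
    define L where "L = (LEAST d. long d)"
    have "long L" unfolding L_def using True by (rule LeastI_ex)
    then obtain i where "2 * K \<le> L" "L \<le> n - 2 * K" "adj A (v i) (v (i + L))"
      unfolding long_def by blast
    moreover have "L \<le> d" if "2 * K \<le> d" "d \<le> n - 2 * K" "adj A (v j) (v (j + d))" for d j
      unfolding L_def using that by (intro Least_le) (auto simp: long_def)
    ultimately show ?thesis
      using that shortest_long_chord_no_far_neighbour[OF K no_bispindle] by blast
  next
    case False
    then show ?thesis using that[of 0] unfolding long_def by auto
  qed
  interpret w: cycle_enum A n "\<lambda>j. v (i + K + j)" by (rule shift)
  have "card (neighbours A (v (i + K + 0))) \<le> 4 * K - 2"
    using arcs loopless no_far by (intro w.card_neighbours_le_if_no_far_neighbour) (auto simp: range_shift)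
  then show ?thesis by auto
qed

lemma colouring_by_index:
  assumes arcs: "A \<subseteq> range v \<times> range v" and loopless: "\<forall>u. (u, u) \<notin> A" and "n \<le> k"
  shows "\<exists>c. proper_colouring (range v) A c k"
proof -
  let ?c = "inv_into {..<n} v"
  have c: "?c u < n" "v (?c u) = u" if "u \<in> range v" for u
  proof -
    have "u \<in> v ` {..<n}" using that range_eq by simp
    from inv_into_into[OF this] f_inv_into_f[OF this] show "?c u < n" "v (?c u) = u" by auto
  qed
  have "proper_colouring (range v) A ?c k"
    unfolding proper_colouring_def
  proof (intro conjI ballI)
    fix u assume "u \<in> range v"
    then show "?c u < k" using c(1) \<open>n \<le> k\<close> by (meson less_le_trans)
  next
    fix e assume e: "e \<in> A"
    then obtain a b where ab: "e = (a, b)" "a \<noteq> b" "a \<in> range v" "b \<in> range v"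
      using arcs loopless by (cases e) auto
    then have "?c a \<noteq> ?c b" using c(2) by metis
    then show "case e of (a, b) \<Rightarrow> ?c a \<noteq> ?c b" using ab(1) by simp
  qed
  then show ?thesis by blast
qed

lemma cycle_enum_shortcut_last:
  assumes "3 \<le> n"
  shows "cycle_enum ({(a, b) \<in> A. a \<noteq> v (n - 1) \<and> b \<noteq> v (n - 1)} \<union> {(v (n - 2), v 0)})
           (n - 1) (\<lambda>i. v (i mod (n - 1)))"
proof
  have mod_less: "i mod (n - 1) < n - 1" for i using assms by simp
  show "0 < n - 1" using assms by simp
  fix i j
  show "v (i mod (n - 1)) = v (j mod (n - 1)) \<longleftrightarrow> i mod (n - 1) = j mod (n - 1)"
    by (rule eq_iff_less) (use mod_less[of i] mod_less[of j] in linarith)+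
  show "(v (i mod (n - 1)), v (Suc i mod (n - 1)))
    \<in> {(a, b) \<in> A. a \<noteq> v (n - 1) \<and> b \<noteq> v (n - 1)} \<union> {(v (n - 2), v 0)}"
  proof (cases "Suc (i mod (n - 1)) = n - 1")
    case True
    then have "i mod (n - 1) = n - 2" "Suc i mod (n - 1) = 0" by (simp_all add: mod_Suc)
    then show ?thesis by simp
  next
    case False
    then have "Suc i mod (n - 1) = Suc (i mod (n - 1))" "Suc (i mod (n - 1)) < n - 1"
      using mod_less[of i] by (simp_all add: mod_Suc)
    then show ?thesis using arc[of "i mod (n - 1)"] mod_less[of i] eq_iff_less by auto
  qed
qed

lemma range_mod_pred:
  assumes "2 \<le> n"
  shows "range (\<lambda>i. v (i mod (n - 1))) = range v - {v (n - 1)}"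
proof (intro subset_antisym subsetI)
  fix w assume "w \<in> range (\<lambda>i. v (i mod (n - 1)))"
  then obtain i where "w = v (i mod (n - 1))" by blast
  moreover have "i mod (n - 1) < n - 1" using assms by simp
  ultimately show "w \<in> range v - {v (n - 1)}" using eq_iff_less[of "i mod (n - 1)" "n - 1"] by auto
next
  fix w assume "w \<in> range v - {v (n - 1)}"
  then obtain j where "j < n" "w = v j" "j \<noteq> n - 1" using range_eq by auto
  then have "w = v (j mod (n - 1))" by simp
  then show "w \<in> range (\<lambda>i. v (i mod (n - 1)))" by (rule range_eqI)
qed

lemma delete_last_vertex:
  assumes "3 \<le> n" and arcs: "A \<subseteq> range v \<times> range v" and loopless: "\<forall>u. (u, u) \<notin> A"
    and no_bispindle: "\<not> contains_bispindle_subdivision (range v) A k1 k2 k3"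
  defines "y \<equiv> v (n - 1)"
  defines "A' \<equiv> {(a, b) \<in> A. a \<noteq> y \<and> b \<noteq> y} \<union> {(v (n - 2), v 0)}"
  defines "u \<equiv> \<lambda>i. v (i mod (n - 1))"
  shows "cycle_enum A' (n - 1) u" "range u = range v - {y}" "A' \<subseteq> range u \<times> range u"
    "\<forall>w. (w, w) \<notin> A'" "\<not> contains_bispindle_subdivision (range u) A' k1 k2 k3"
proof -
  show "cycle_enum A' (n - 1) u"
    unfolding A'_def u_def y_def using \<open>3 \<le> n\<close> by (rule cycle_enum_shortcut_last)
  show range_u: "range u = range v - {y}"
    unfolding u_def y_def using \<open>3 \<le> n\<close> by (intro range_mod_pred) simp
  have ends: "v (n - 2) \<in> range v - {y}" "v 0 \<in> range v - {y}"
    unfolding y_def using eq_iff_less \<open>3 \<le> n\<close> by auto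
  then show "A' \<subseteq> range u \<times> range u"
    unfolding range_u A'_def using arcs by blast
  show "\<forall>w. (w, w) \<notin> A'"
    unfolding A'_def using loopless eq_iff_less \<open>3 \<le> n\<close> by auto
  have py: "(v (n - 2), y) \<in> A"
    using arc[of "n - 2"] \<open>3 \<le> n\<close> unfolding y_def by (simp add: numeral_2_eq_2 Suc_diff_Suc)
  have ys: "(y, v 0) \<in> A"
    using arc[of "n - 1"] pos period unfolding y_def by simp
  have A': "a \<noteq> y \<and> b \<noteq> y \<and> ((a, b) \<in> A \<or> (a = v (n - 2) \<and> b = v 0))"
    if "(a, b) \<in> A'" for a b
    using that ends unfolding A'_def by auto
  have "range u \<subseteq> range v" using range_u by blast
  then show "\<not> contains_bispindle_subdivision (range u) A' k1 k2 k3"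
    using contains_bispindle_subdivision_subdivide_arc[OF _ \<open>range u \<subseteq> range v\<close> py ys A']
      no_bispindle by blast
qed

lemma delete_vertex:
  assumes "3 \<le> n" "y \<in> range v" and arcs: "A \<subseteq> range v \<times> range v"
    and loopless: "\<forall>u. (u, u) \<notin> A"
    and no_bispindle: "\<not> contains_bispindle_subdivision (range v) A k1 k2 k3"
  obtains A' u where "cycle_enum A' (n - 1) u" "range u = range v - {y}"
    "A' \<subseteq> range u \<times> range u" "\<forall>w. (w, w) \<notin> A'"
    "\<not> contains_bispindle_subdivision (range u) A' k1 k2 k3"
    "\<And>a b. (a, b) \<in> A \<Longrightarrow> a \<noteq> y \<Longrightarrow> b \<noteq> y \<Longrightarrow> (a, b) \<in> A'"
proof -
  obtain t where t: "y = v t" using assms(2) by blast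
  interpret w: cycle_enum A n "\<lambda>i. v (Suc t + i)" by (rule shift)
  have "Suc t + (n - 1) = n + t" using pos by simp
  then have y: "v (Suc t + (n - 1)) = y" using t by (simp only: add_period)
  note deleted = w.delete_last_vertex[unfolded range_shift, OF \<open>3 \<le> n\<close> arcs loopless no_bispindle,
      unfolded y]
  show ?thesis by (rule that[OF deleted]) auto
qed

end

lemma bispindle_free_colourable:
  assumes K: "1 \<le> K" "k1 \<le> K" "k2 \<le> K" "k3 \<le> K"
    and "cycle_enum A n v" "A \<subseteq> range v \<times> range v" "\<forall>u. (u, u) \<notin> A"
    and "\<not> contains_bispindle_subdivision (range v) A k1 k2 k3"
  shows "\<exists>c. proper_colouring (range v) A c (4 * K)"
  using assms(5-)
proof (induction n arbitrary: A v rule: less_induct)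
  case (less n)
  interpret cycle_enum A n v by (rule less.prems(1))
  show ?case
  proof (cases "n \<le> 4 * K")
    case True
    with less.prems(2,3) show ?thesis by (rule colouring_by_index)
  next
    case False
    obtain y where y: "y \<in> range v" "card (neighbours A y) \<le> 4 * K - 2"
      using low_degree_vertex[OF K less.prems(2-4)] by blast
    have "3 \<le> n" using False K(1) by linarith
    obtain A' u where u: "cycle_enum A' (n - 1) u" "range u = range v - {y}"
      "A' \<subseteq> range u \<times> range u" "\<forall>w. (w, w) \<notin> A'"
      "\<not> contains_bispindle_subdivision (range u) A' k1 k2 k3"
      and A': "\<And>a b. (a, b) \<in> A \<Longrightarrow> a \<noteq> y \<Longrightarrow> b \<noteq> y \<Longrightarrow> (a, b) \<in> A'"
      using delete_vertex[OF \<open>3 \<le> n\<close> y(1) less.prems(2-4)] by blast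
    obtain c where c: "proper_colouring (range v - {y}) A' c (4 * K)"
      using less.IH[OF _ u(1,3-5)] u(2) pos by auto
    have "neighbours A y \<subseteq> range v"
      using less.prems(2) unfolding neighbours_def adj_def by blast
    then have "finite (neighbours A y)" by (rule finite_subset) (simp add: range_eq)
    moreover have "card (neighbours A y) < 4 * K" using y(2) K(1) by linarith
    ultimately obtain col where "proper_colouring (range v) A (c(y := col)) (4 * K)"
      using proper_colouring_extend[OF c A' less.prems(3)] by blast
    then show ?thesis by blast
  qed
qed

lemma hamiltonian_cycle_enum:
  assumes "hamiltonian V A"
  obtains n v where "cycle_enum A n v" "range v = V"
proof -
  obtain vs where vs: "vs \<noteq> []" "distinct vs" "set vs = V"
    "\<forall>i < length vs. (vs ! i, vs ! ((i + 1) mod length vs)) \<in> A"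
    using assms unfolding hamiltonian_def by blast
  let ?n = "length vs" and ?v = "\<lambda>i. vs ! (i mod length vs)"
  have n: "0 < ?n" using vs(1) by simp
  have "cycle_enum A ?n ?v"
  proof
    fix i j
    show "?v i = ?v j \<longleftrightarrow> i mod ?n = j mod ?n" using vs(2) n by (simp add: nth_eq_iff_index_eq)
    show "(?v i, ?v (Suc i)) \<in> A" using vs(4)[rule_format, of "i mod ?n"] n by (simp add: mod_Suc_eq)
  qed (rule n)
  moreover have "range ?v = V"
  proof (intro subset_antisym subsetI)
    fix x assume "x \<in> V"
    then obtain j where "j < ?n" "x = vs ! j" using vs(3) by (auto simp: in_set_conv_nth)
    then show "x \<in> range ?v" by (metis mod_less rangeI)
  qed (use vs(3) n in auto)
  ultimately show ?thesis by (rule that)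
qed

theorem theorem8:
  fixes V :: "'a set" and A :: "('a \<times> 'a) set" and k1 k2 k3 :: nat
  assumes "digraph V A"
    and "k1 \<ge> 1" and "k2 \<ge> 1" and "k3 \<ge> 1"
    and "hamiltonian V A"
    and "\<not> contains_bispindle_subdivision V A k1 k2 k3"
  shows "chromatic_number V A \<le> 4 * max k1 (max k2 k3)"
proof -
  define K where "K = max k1 (max k2 k3)"
  have K: "1 \<le> K" "k1 \<le> K" "k2 \<le> K" "k3 \<le> K" unfolding K_def using assms(2) by auto
  obtain n v where v: "cycle_enum A n v" "range v = V"
    using assms(5) by (rule hamiltonian_cycle_enum)
  have "A \<subseteq> range v \<times> range v" "\<forall>u. (u, u) \<notin> A"
    using assms(1) v(2) unfolding digraph_def by auto
  then obtain c where "proper_colouring V A c (4 * K)"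
    using bispindle_free_colourable[OF K v(1)] assms(6) v(2) by auto
  then show ?thesis unfolding chromatic_number_def K_def by (intro Least_le) blast
qed

end
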